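(* Let $m\in\mathbb R$ satisfy $D^-M(m)\le0\le D^+M(m)$, assume the boundedness condition (B) holds, and let $(a_n)_{n\in\mathbb N}$ be a positive sequence with $a_n\to\infty$ such that $\sqrt n\,D^+M(m+x/a_n)\to\delta(x)\in[-\infty,\infty]$ for every $x\in\mathbb R$. Use the conventions $\exp(-\infty)=0$. (1) If the right limits $\alpha_+:=a(0+)$ and $\beta_+:=b(0+)$ exist in $\mathbb R$ with $\beta_+>\alpha_+$, then $\limsup_{n\to\infty}\mathbb P\big(a_n\sup_{k\ge n}(\hat m_k-m)>x\big)\le\exp\{-2(\beta_+-\alpha_+)^{-2}\delta(x)^2\}$ for all $x>0$. (2) If the left limits $\alpha_-:=a(0-)$ and $\beta_-:=b(0-)$ exist in $\mathbb R$ with $\beta_->\alpha_-$, then $\limsup_{n\to\infty}\mathbb P\big(a_n\inf_{k\ge n}(\hat m_k-m)<x\big)\le\exp\{-2(\beta_--\alpha_-)^{-2}\delta(x)^2\}$ for all $x<0$. (3) If both one-sided limits exist as in (1) and (2), then $\limsup_{n\to\infty}\mathbb P\big(a_n\sup_{k\ge n}|\hat m_k-m|>x\big)\le 2\exp\{-2\tau^{-2}\Delta(x)^2\}$ for all $x>0$, where $\tau:=\max\{\beta_+-\alpha_+,\beta_--\alpha_-\}$ and $\Delta(x):=\min\{\delta(x),-\delta(-x)\}$.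
   Context: Let $(S,\mathcal S,Q)$ be a probability space and $h:S\times\mathbb R\to\mathbb R$ such that $h(\cdot,t)$ is $\mathcal S$-measurable for every $t\in\mathbb R$ and $h(x,\cdot)$ is convex for every $x\in S$. For $f:\mathbb R\to\mathbb R$ convex, $D^+f$ and $D^-f$ denote its right and left derivatives; $D^\pm h(x,t)$ denotes the one-sided derivatives of $h(x,\cdot)$ at $t$. Assume $\int_S|D^+h(x,t)|\,Q(dx)<\infty$ and $\int_S|D^-h(x,t)|\,Q(dx)<\infty$ for all $t\in\mathbb R$. Fix $t_0\in\mathbb R$ and set $M(t):=\int_S (h(x,t)-h(x,t_0))\,Q(dx)$; $M$ is real-valued and convex with $D^\pm M(t)=\int_S D^\pm h(x,t)\,Q(dx)$. Let $X_1,X_2,\dots$ be i.i.d. $S$-valued random variables on a probability space $(\Omega,\mathcal A,\mathbb P)$ with common law $Q$, let $M_n(t):=\frac1n\sum_{i=1}^n (h(X_i,t)-h(X_i,t_0))$, and let $\hat m_n$ be the smallest minimizing point of $M_n$ (assumed to exist; it is a random variable). Boundedness condition (B): for every $x\neq 0$ there are reals $a(x)<b(x)$ with $a(x)\le D^+h(X_1,m+x)\le b(x)$ almost surely. *)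

theory Defs
  imports "HOL-Probability.Probability"
begin

definition Dplus :: "(real \<Rightarrow> real) \<Rightarrow> real \<Rightarrow> real" where
  "Dplus f t = Lim (at_right 0) (\<lambda>s. (f (t + s) - f t) / s)"

definition Dminus :: "(real \<Rightarrow> real) \<Rightarrow> real \<Rightarrow> real" where
  "Dminus f t = Lim (at_left 0) (\<lambda>s. (f (t + s) - f t) / s)"

definition popM :: "'s measure \<Rightarrow> ('s \<Rightarrow> real \<Rightarrow> real) \<Rightarrow> real \<Rightarrow> real \<Rightarrow> real" where
  "popM Q h t0 t = (\<integral>x. (h x t - h x t0) \<partial>Q)"

definition empM :: "('s \<Rightarrow> real \<Rightarrow> real) \<Rightarrow> real \<Rightarrow> (nat \<Rightarrow> 'w \<Rightarrow> 's) \<Rightarrow> nat \<Rightarrow> 'w \<Rightarrow> real \<Rightarrow> real" where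
  "empM h t0 X n \<omega> t = (1 / real n) * (\<Sum>i<n. (h (X i \<omega>) t - h (X i \<omega>) t0))"

fun eexp :: "ereal \<Rightarrow> ereal" where
  "eexp (ereal r) = ereal (exp r)"
| "eexp PInfty = PInfty"
| "eexp MInfty = 0"

end

theory Submission
  imports Defs
begin

text \<open>
  At every \<open>t\<close> below the smallest minimiser \<open>mhat k\<close> of \<open>M\<^sub>k\<close> the sum of the right
  derivatives \<open>D\<^sup>+h(X\<^sub>i, t)\<close>, \<open>i < k\<close>, is negative, and above it the sum is nonnegative.
  Hence \<open>mhat k > m + x / a\<^sub>n\<close> for some \<open>k \<ge> n\<close> means that the random walk with steps
  \<open>D\<^sup>+h(X\<^sub>i, m + x / a\<^sub>n)\<close> (i.i.d., with values in \<open>[a, b]\<close> and mean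
  \<open>D\<^sup>+M(m + x / a\<^sub>n) \<ge> 0\<close>) is nonpositive at some time \<open>k \<ge> n\<close>. A maximal Hoeffding
  inequality, obtained from Ville's inequality for the exponentially tilted product martingale,
  bounds this probability by \<open>exp (-2 n D\<^sup>+M(m + x / a\<^sub>n)\<^sup>2 / (b - a)\<^sup>2)\<close>, which tends to the
  stated bound. The left tail is symmetric, and the two-sided bound is the sum of both.
\<close>

section \<open>One-sided derivatives of convex functions\<close>

lemma convex_on_slope_mono_right:
  fixes f :: "real \<Rightarrow> real"
  assumes f: "convex_on UNIV f" and "0 < s" "s \<le> s'"
  shows "(f (t + s) - f t) / s \<le> (f (t + s') - f t) / s'"
proof (cases "s = s'")
  case False
  with assms have "s < s'" by simp
  then have "(f t - f (t + s)) / (t - (t + s)) \<le> (f t - f (t + s')) / (t - (t + s'))"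
    using convex_on_slope_le(1)[OF f, of t "t + s'" "t + s"] \<open>0 < s\<close> by simp
  moreover have "(f t - f (t + r)) / (t - (t + r)) = (f (t + r) - f t) / r" for r
    by (simp add: divide_minus_right minus_divide_left)
  ultimately show ?thesis by metis
qed simp

lemma convex_on_slope_le_right_slope:
  fixes f :: "real \<Rightarrow> real"
  assumes f: "convex_on UNIV f" and "u < t" "0 < s"
  shows "(f t - f u) / (t - u) \<le> (f (t + s) - f t) / s"
proof -
  have "(f u - f t) / (u - t) \<le> (f u - f (t + s)) / (u - (t + s))"
    using convex_on_slope_le(1)[OF f, of u "t + s" t] assms by simp
  also have "\<dots> \<le> (f t - f (t + s)) / (t - (t + s))"
    using convex_on_slope_le(2)[OF f, of u "t + s" t] assms by simp
  also have "\<dots> = (f (t + s) - f t) / s"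
    by (simp add: divide_minus_right minus_divide_left)
  finally show ?thesis
    by (metis minus_diff_eq minus_divide_divide)
qed

lemma convex_on_Dplus_tendsto:
  fixes f :: "real \<Rightarrow> real"
  assumes f: "convex_on UNIV f"
  shows "((\<lambda>s. (f (t + s) - f t) / s) \<longlongrightarrow> Dplus f t) (at_right 0)"
proof -
  let ?R = "\<lambda>s. (f (t + s) - f t) / s"
  have "(?R \<longlongrightarrow> Inf (?R ` ({0<..} \<inter> UNIV))) (at 0 within ({0<..} \<inter> UNIV))"
  proof (rule Lim_right_bound[where K = "(f t - f (t - 1)) / (t - (t - 1))"])
    show "?R s \<le> ?R s'" if "0 < s" "s \<le> s'" for s s'
      using convex_on_slope_mono_right[OF f that] .
    show "(f t - f (t - 1)) / (t - (t - 1)) \<le> ?R s" if "0 < s" for s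
      using convex_on_slope_le_right_slope[OF f, of "t - 1" t s] that by simp
  qed
  then have lim: "(?R \<longlongrightarrow> Inf (?R ` ({0<..} \<inter> UNIV))) (at_right 0)" by simp
  then have "Dplus f t = Inf (?R ` ({0<..} \<inter> UNIV))"
    unfolding Dplus_def by (intro tendsto_Lim) auto
  with lim show ?thesis by simp
qed

lemma convex_on_Dplus_le_slope:
  fixes f :: "real \<Rightarrow> real"
  assumes f: "convex_on UNIV f" and "0 < s"
  shows "Dplus f t \<le> (f (t + s) - f t) / s"
proof (rule tendsto_le[OF _ tendsto_const convex_on_Dplus_tendsto[OF f]])
  show "\<forall>\<^sub>F s' in at_right 0. (f (t + s') - f t) / s' \<le> (f (t + s) - f t) / s"
    using eventually_at_right_real[OF \<open>0 < s\<close>]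
    by eventually_elim (use convex_on_slope_mono_right[OF f] in auto)
qed simp

lemma convex_on_slope_le_Dplus:
  fixes f :: "real \<Rightarrow> real"
  assumes f: "convex_on UNIV f" and "u < t"
  shows "(f t - f u) / (t - u) \<le> Dplus f t"
proof (rule tendsto_le[OF _ convex_on_Dplus_tendsto[OF f] tendsto_const])
  show "\<forall>\<^sub>F s in at_right 0. (f t - f u) / (t - u) \<le> (f (t + s) - f t) / s"
    using eventually_at_right_real[OF zero_less_one]
    by eventually_elim (use convex_on_slope_le_right_slope[OF f \<open>u < t\<close>] in auto)
qed simp

lemma convex_on_Dplus_subgradient:
  fixes f :: "real \<Rightarrow> real"
  assumes f: "convex_on UNIV f"
  shows "f t + Dplus f t * (u - t) \<le> f u"
proof (cases u t rule: linorder_cases)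
  case less
  then show ?thesis
    using convex_on_slope_le_Dplus[OF f less] by (simp add: field_simps)
next
  case greater
  then have "Dplus f t \<le> (f (t + (u - t)) - f t) / (u - t)"
    by (intro convex_on_Dplus_le_slope[OF f]) simp
  with greater show ?thesis by (simp add: field_simps)
qed simp

lemma convex_on_Dplus_mono:
  fixes f :: "real \<Rightarrow> real"
  assumes f: "convex_on UNIV f" and "s \<le> t"
  shows "Dplus f s \<le> Dplus f t"
proof -
  have "f s + Dplus f s * (t - s) \<le> f t" "f t + Dplus f t * (s - t) \<le> f s"
    by (rule convex_on_Dplus_subgradient[OF f])+
  then have "Dplus f s * (t - s) \<le> Dplus f t * (t - s)" by (simp add: algebra_simps)
  with \<open>s \<le> t\<close> show ?thesis
    by (cases "s = t") (simp_all add: mult_le_cancel_right)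
qed

lemma convex_on_Dplus_le_Dminus:
  fixes f :: "real \<Rightarrow> real"
  assumes f: "convex_on UNIV f" and "u < t"
  shows "Dplus f u \<le> Dminus f t"
proof -
  let ?L = "\<lambda>s. (f (t + s) - f t) / s"
  have "(?L \<longlongrightarrow> Sup (?L ` ({..<0} \<inter> UNIV))) (at 0 within ({..<0} \<inter> UNIV))"
  proof (rule Lim_left_bound[where K = "Dplus f t"])
    show "?L s \<le> ?L s'" if "s' < 0" "s \<le> s'" for s s'
    proof (cases "s = s'")
      case False
      with that have "s < s'" by simp
      then show ?thesis
        using convex_on_slope_le(2)[OF f, of "t + s" t "t + s'"] that by simp
    qed simp
    show "?L s \<le> Dplus f t" if "s < 0" for s
      using convex_on_Dplus_subgradient[OF f, of t "t + s"] that by (simp add: field_simps)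
  qed
  then have "(?L \<longlongrightarrow> Sup (?L ` ({..<0} \<inter> UNIV))) (at_left 0)" by simp
  moreover from this have "Dminus f t = Sup (?L ` ({..<0} \<inter> UNIV))"
    unfolding Dminus_def by (intro tendsto_Lim) auto
  ultimately have lim: "(?L \<longlongrightarrow> Dminus f t) (at_left 0)" by simp
  show ?thesis
  proof (rule tendsto_le[OF _ lim tendsto_const])
    have "\<forall>\<^sub>F s in at_left 0. s \<in> {u - t<..<0}"
      by (rule eventually_at_left_real) (use \<open>u < t\<close> in simp)
    then show "\<forall>\<^sub>F s in at_left 0. Dplus f u \<le> ?L s"
    proof eventually_elim
      case (elim s)
      then have "u < t + s" "s < 0" by auto
      have "Dplus f u \<le> Dplus f (t + s)"
        using convex_on_Dplus_mono[OF f] \<open>u < t + s\<close> by simp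
      also have "\<dots> \<le> ?L s"
        using convex_on_Dplus_subgradient[OF f, of "t + s" t] \<open>s < 0\<close> by (simp add: field_simps)
      finally show ?case .
    qed
  qed simp
qed

section \<open>A maximal Hoeffding inequality\<close>

text \<open>
  The product \<open>\<Prod>\<^sub>i\<^sub><\<^sub>j e (f i)\<close>, frozen from the first time it reaches \<open>C\<close>. For
  independent nonnegative factors of mean at most \<open>1\<close> it is a nonnegative supermartingale
  stopped at a hitting time, so its mean stays at most \<open>1\<close>.
\<close>
fun stopped_prod :: "real \<Rightarrow> ('s \<Rightarrow> real) \<Rightarrow> nat \<Rightarrow> (nat \<Rightarrow> 's) \<Rightarrow> real" where
  "stopped_prod C e 0 f = 1"
| "stopped_prod C e (Suc j) f =
     (if C \<le> stopped_prod C e j f then stopped_prod C e j f else stopped_prod C e j f * e (f j))"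

lemma stopped_prod_nonneg: "(\<And>z. 0 \<le> e z) \<Longrightarrow> 0 \<le> stopped_prod C e j f"
  by (induction j) auto

lemma stopped_prod_cong: "(\<And>i. i < j \<Longrightarrow> f i = g i) \<Longrightarrow> stopped_prod C e j f = stopped_prod C e j g"
  by (induction j) auto

lemma stopped_prod_ge_or_eq_prod: "C \<le> stopped_prod C e j f \<or> stopped_prod C e j f = (\<Prod>i<j. e (f i))"
  by (induction j) auto

lemma stopped_prod_ge_mono:
  assumes "C \<le> stopped_prod C e j f" and "j \<le> N"
  shows "C \<le> stopped_prod C e N f"
  using assms(2) by (induction N) (use assms(1) le_Suc_eq in auto)

lemma measurable_stopped_prod:
  assumes e: "e \<in> borel_measurable Q" and "{..<j} \<subseteq> J"
  shows "(\<lambda>f. stopped_prod C e j f) \<in> borel_measurable (PiM J (\<lambda>_. Q))"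
  using assms(2)
proof (induction j)
  case (Suc j)
  have "{..<j} \<subseteq> J" "j \<in> J" using Suc.prems by auto
  with Suc.IH have [measurable]: "(\<lambda>f. stopped_prod C e j f) \<in> borel_measurable (PiM J (\<lambda>_. Q))"
    by simp
  have [measurable]: "(\<lambda>f. e (f j)) \<in> borel_measurable (PiM J (\<lambda>_. Q))"
    using measurable_comp[OF measurable_component_singleton[OF \<open>j \<in> J\<close>] e] by (simp add: comp_def)
  show ?case by simp measurable
next
  case 0
  have "stopped_prod C e 0 = (\<lambda>_. 1)" by (rule ext) simp
  then show ?case by simp
qed

lemma measurable_stopped_prod_process:
  assumes "\<And>i. X i \<in> measurable P Q" and e: "e \<in> borel_measurable Q"
  shows "(\<lambda>\<omega>. stopped_prod C e j (\<lambda>i. X i \<omega>)) \<in> borel_measurable P"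
  using measurable_comp[OF measurable_restrict[OF assms(1)] measurable_stopped_prod[OF e, of j UNIV C]]
  by (simp add: comp_def restrict_def)

lemma (in prob_space) indep_var_nn_integral:
  fixes X1 X2 :: "'a \<Rightarrow> ennreal"
  assumes "indep_var borel X1 borel X2"
  shows "(\<integral>\<^sup>+\<omega>. X1 \<omega> * X2 \<omega> \<partial>M) = (\<integral>\<^sup>+\<omega>. X1 \<omega> \<partial>M) * (\<integral>\<^sup>+\<omega>. X2 \<omega> \<partial>M)"
proof -
  have prod: "(\<lambda>\<omega>. X1 \<omega> * X2 \<omega>) = (\<lambda>\<omega>. \<Prod>i\<in>UNIV. case_bool X1 X2 i \<omega>)"
    by (simp add: UNIV_bool mult.commute)
  have borel: "(\<lambda>_. borel) = case_bool borel borel"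
    by (rule ext) (simp split: bool.split)
  have "indep_vars (\<lambda>_. borel) (case_bool X1 X2) UNIV"
    using assms unfolding indep_var_def borel .
  then show ?thesis
    unfolding prod by (subst indep_vars_nn_integral) (auto simp: UNIV_bool mult.commute)
qed

lemma nn_integral_hoeffding_factor_le_1:
  fixes Y :: "'w \<Rightarrow> 's" and g :: "'s \<Rightarrow> real"
  assumes Q: "prob_space Q" and Y: "Y \<in> measurable P Q" "distr P Q Y = Q"
    and g[measurable]: "g \<in> borel_measurable Q" and g_bounds: "AE x in Q. \<alpha> \<le> g x \<and> g x \<le> \<beta>"
    and "0 < l"
  shows "(\<integral>\<^sup>+\<omega>. ennreal (exp (l * (integral\<^sup>L Q g - g (Y \<omega>)) - l\<^sup>2 * (\<beta> - \<alpha>)\<^sup>2 / 8)) \<partial>P) \<le> 1"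
proof -
  interpret Q: prob_space Q by fact
  interpret interval_bounded_random_variable Q "\<lambda>x. - g x" "-\<beta>" "-\<alpha>"
    by unfold_locales (auto intro!: eventually_mono[OF g_bounds])
  let ?c = "l\<^sup>2 * (\<beta> - \<alpha>)\<^sup>2 / 8"
  have hoeffding: "(\<integral>\<^sup>+x. ennreal (exp (l * (integral\<^sup>L Q g - g x))) \<partial>Q) \<le> ennreal (exp ?c)"
    using Hoeffdings_lemma_nn_integral[OF \<open>0 < l\<close>] by (simp add: algebra_simps)
  have "(\<integral>\<^sup>+\<omega>. ennreal (exp (l * (integral\<^sup>L Q g - g (Y \<omega>)) - ?c)) \<partial>P)
      = (\<integral>\<^sup>+x. ennreal (exp (- ?c)) * ennreal (exp (l * (integral\<^sup>L Q g - g x))) \<partial>Q)"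
    by (subst Y(2)[symmetric], subst nn_integral_distr[OF Y(1)])
       (simp_all flip: ennreal_mult exp_add)
  also have "\<dots> = ennreal (exp (- ?c)) * (\<integral>\<^sup>+x. ennreal (exp (l * (integral\<^sup>L Q g - g x))) \<partial>Q)"
    by (rule nn_integral_cmult) simp
  also have "\<dots> \<le> ennreal (exp (- ?c)) * ennreal (exp ?c)"
    by (intro mult_left_mono hoeffding) simp
  also have "\<dots> = 1"
    by (simp flip: ennreal_mult exp_add)
  finally show ?thesis .
qed

lemma (in prob_space) indep_var_stopped_prod_next:
  fixes \<phi> :: "real \<Rightarrow> ennreal" and \<psi> :: "'s \<Rightarrow> ennreal"
  assumes X_meas: "\<And>i. X i \<in> measurable M Q" and X_indep: "indep_vars (\<lambda>_. Q) X UNIV"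
    and [measurable]: "e \<in> borel_measurable Q" "\<phi> \<in> borel_measurable borel" "\<psi> \<in> borel_measurable Q"
  shows "indep_var borel (\<lambda>\<omega>. \<phi> (stopped_prod C e N (\<lambda>i. X i \<omega>))) borel (\<lambda>\<omega>. \<psi> (X N \<omega>))"
proof -
  have "indep_var (PiM {..<N} (\<lambda>_. Q)) (\<lambda>\<omega>. restrict (\<lambda>i. X i \<omega>) {..<N})
                  (PiM {N} (\<lambda>_. Q)) (\<lambda>\<omega>. restrict (\<lambda>i. X i \<omega>) {N})"
    by (rule indep_var_restrict[OF X_indep]) auto
  moreover have "(\<lambda>f. \<phi> (stopped_prod C e N f)) \<in> borel_measurable (PiM {..<N} (\<lambda>_. Q))"
    using measurable_stopped_prod[of e Q N "{..<N}" C] by simp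
  moreover have "(\<lambda>f. \<psi> (f N)) \<in> borel_measurable (PiM {N} (\<lambda>_. Q))"
    using measurable_comp[OF measurable_component_singleton[of N "{N}" "\<lambda>_. Q"]] by (simp add: comp_def)
  ultimately have "indep_var borel (\<lambda>\<omega>. \<phi> (stopped_prod C e N (restrict (\<lambda>i. X i \<omega>) {..<N})))
                           borel (\<lambda>\<omega>. \<psi> (restrict (\<lambda>i. X i \<omega>) {N} N))"
    by (rule indep_var_compose[unfolded comp_def])
  moreover have "stopped_prod C e N (restrict (\<lambda>i. X i \<omega>) {..<N}) = stopped_prod C e N (\<lambda>i. X i \<omega>)" for \<omega>
    by (rule stopped_prod_cong) simp
  ultimately show ?thesis by simp
qed

lemma (in prob_space) nn_integral_stopped_prod_le_1:
  assumes X_meas: "\<And>i. X i \<in> measurable M Q" and X_indep: "indep_vars (\<lambda>_. Q) X UNIV"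
    and e[measurable]: "e \<in> borel_measurable Q" and e_nonneg: "\<And>z. 0 \<le> e z"
    and e_mean: "\<And>j. (\<integral>\<^sup>+\<omega>. ennreal (e (X j \<omega>)) \<partial>M) \<le> 1"
  shows "(\<integral>\<^sup>+\<omega>. ennreal (stopped_prod C e N (\<lambda>i. X i \<omega>)) \<partial>M) \<le> 1"
proof (induction N)
  case 0
  then show ?case by (simp add: emeasure_space_1)
next
  case (Suc N)
  define V where "V \<omega> = stopped_prod C e N (\<lambda>i. X i \<omega>)" for \<omega>
  define stopped where "stopped v = ennreal (if C \<le> v then v else 0)" for v
  define running where "running v = ennreal (if C \<le> v then 0 else v)" for v
  have [measurable]: "V \<in> borel_measurable M"
    unfolding V_def by (rule measurable_stopped_prod_process[OF X_meas e])
  have [measurable]: "(\<lambda>\<omega>. e (X N \<omega>)) \<in> borel_measurable M"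
    using measurable_comp[OF X_meas e] by (simp add: comp_def)
  have [measurable]: "stopped \<in> borel_measurable borel" "running \<in> borel_measurable borel"
    unfolding stopped_def running_def by simp_all
  have split: "ennreal (stopped_prod C e (Suc N) (\<lambda>i. X i \<omega>))
      = stopped (V \<omega>) + running (V \<omega>) * ennreal (e (X N \<omega>))" for \<omega>
    using stopped_prod_nonneg[of e C N "\<lambda>i. X i \<omega>", OF e_nonneg] e_nonneg[of "X N \<omega>"]
    by (simp add: V_def stopped_def running_def ennreal_mult)
  have indep: "indep_var borel (\<lambda>\<omega>. running (V \<omega>)) borel (\<lambda>\<omega>. ennreal (e (X N \<omega>)))"
    unfolding V_def by (rule indep_var_stopped_prod_next[OF X_meas X_indep]) (simp_all add: running_def)
  have "(\<integral>\<^sup>+\<omega>. ennreal (stopped_prod C e (Suc N) (\<lambda>i. X i \<omega>)) \<partial>M)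
      = (\<integral>\<^sup>+\<omega>. stopped (V \<omega>) \<partial>M) + (\<integral>\<^sup>+\<omega>. running (V \<omega>) \<partial>M) * (\<integral>\<^sup>+\<omega>. ennreal (e (X N \<omega>)) \<partial>M)"
    unfolding split indep_var_nn_integral[OF indep, symmetric] by (rule nn_integral_add) simp_all
  also have "\<dots> \<le> (\<integral>\<^sup>+\<omega>. stopped (V \<omega>) \<partial>M) + (\<integral>\<^sup>+\<omega>. running (V \<omega>) \<partial>M)"
    using mult_left_mono[OF e_mean[of N], of "\<integral>\<^sup>+\<omega>. running (V \<omega>) \<partial>M"] by (simp add: add_left_mono)
  also have "\<dots> = (\<integral>\<^sup>+\<omega>. ennreal (V \<omega>) \<partial>M)"
    by (subst nn_integral_add[symmetric]) (auto intro!: nn_integral_cong simp: stopped_def running_def)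
  also have "\<dots> \<le> 1"
    using Suc.IH by (simp add: V_def)
  finally show ?case .
qed

lemma (in prob_space) measure_stopped_prod_ge_le:
  assumes X_meas: "\<And>i. X i \<in> measurable M Q" and X_indep: "indep_vars (\<lambda>_. Q) X UNIV"
    and e[measurable]: "e \<in> borel_measurable Q" and e_nonneg: "\<And>z. 0 \<le> e z"
    and e_mean: "\<And>j. (\<integral>\<^sup>+\<omega>. ennreal (e (X j \<omega>)) \<partial>M) \<le> 1"
    and "0 < C"
  shows "measure M {\<omega>\<in>space M. C \<le> stopped_prod C e N (\<lambda>i. X i \<omega>)} \<le> 1 / C"
proof -
  let ?T = "{\<omega>\<in>space M. C \<le> stopped_prod C e N (\<lambda>i. X i \<omega>)}"
  have [measurable]: "(\<lambda>\<omega>. stopped_prod C e N (\<lambda>i. X i \<omega>)) \<in> borel_measurable M"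
    by (rule measurable_stopped_prod_process[OF X_meas e])
  have "ennreal C * emeasure M ?T = (\<integral>\<^sup>+\<omega>. ennreal C * indicator ?T \<omega> \<partial>M)"
    by (rule nn_integral_cmult_indicator[symmetric]) measurable
  also have "\<dots> \<le> (\<integral>\<^sup>+\<omega>. ennreal (stopped_prod C e N (\<lambda>i. X i \<omega>)) \<partial>M)"
    by (intro nn_integral_mono) (auto simp: indicator_def intro: ennreal_leI)
  also have "\<dots> \<le> 1"
    by (rule nn_integral_stopped_prod_le_1[OF X_meas X_indep e e_nonneg e_mean])
  finally have "C * measure M ?T \<le> 1"
    using \<open>0 < C\<close> by (simp add: emeasure_eq_measure ennreal_le_1 flip: ennreal_mult)
  with \<open>0 < C\<close> show ?thesis by (simp add: field_simps)
qed

lemma exp_tilted_prod_ge: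
  assumes "0 < l" "0 \<le> \<gamma>" "n \<le> k" "(\<Sum>i<k. g i) \<le> 0"
  shows "exp (real n * \<gamma>) \<le> (\<Prod>i<k. exp (\<gamma> - l * g i))"
proof -
  have "real n * \<gamma> \<le> real k * \<gamma> - l * (\<Sum>i<k. g i)"
    using assms mult_right_mono[of "real n" "real k" \<gamma>] mult_nonneg_nonpos[of l "\<Sum>i<k. g i"]
    by simp
  also have "\<dots> = (\<Sum>i<k. \<gamma> - l * g i)"
    by (simp add: sum_subtractf sum_distrib_left)
  finally have "exp (real n * \<gamma>) \<le> exp (\<Sum>i<k. \<gamma> - l * g i)" by simp
  then show ?thesis by (simp add: exp_sum)
qed

text \<open>
  With Hoeffding's optimal parameter \<open>l = 4 \<nu> / (\<beta> - \<alpha>)\<^sup>2\<close>, where \<open>\<nu>\<close> is the mean step,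
  every return of the walk to \<open>(-\<infinity>, 0]\<close> after time \<open>n\<close> pushes the tilted product above
  \<open>exp (2 n \<nu>\<^sup>2 / (\<beta> - \<alpha>)\<^sup>2)\<close>.
\<close>
lemma (in prob_space) maximal_hoeffding_up_to:
  assumes Q: "prob_space Q"
    and X_meas: "\<And>i. X i \<in> measurable M Q" and X_distr: "\<And>i. distr M Q (X i) = Q"
    and X_indep: "indep_vars (\<lambda>_. Q) X UNIV"
    and g[measurable]: "g \<in> borel_measurable Q" and g_bounds: "AE x in Q. \<alpha> \<le> g x \<and> g x \<le> \<beta>"
    and "\<alpha> < \<beta>" and mean_pos: "0 < integral\<^sup>L Q g"
  shows "measure M {\<omega>\<in>space M. \<exists>k. n \<le> k \<and> k \<le> N \<and> (\<Sum>i<k. g (X i \<omega>)) \<le> 0}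
           \<le> exp (-2 * real n * (integral\<^sup>L Q g)\<^sup>2 / (\<beta> - \<alpha>)\<^sup>2)"
proof -
  define \<nu> where "\<nu> = integral\<^sup>L Q g"
  define r where "r = \<beta> - \<alpha>"
  define l where "l = 4 * \<nu> / r\<^sup>2"
  define \<gamma> where "\<gamma> = 2 * \<nu>\<^sup>2 / r\<^sup>2"
  define e where "e z = exp (\<gamma> - l * g z)" for z
  define C where "C = exp (real n * \<gamma>)"
  have "0 < r" using \<open>\<alpha> < \<beta>\<close> by (simp add: r_def)
  with mean_pos have "0 < l" "0 \<le> \<gamma>" by (simp_all add: l_def \<gamma>_def \<nu>_def)
  have e_meas[measurable]: "e \<in> borel_measurable Q"
    unfolding e_def[abs_def] by measurable
  have [measurable]: "(\<lambda>\<omega>. g (X i \<omega>)) \<in> borel_measurable M"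
    "(\<lambda>\<omega>. stopped_prod C e N (\<lambda>i. X i \<omega>)) \<in> borel_measurable M" for i
    using measurable_comp[OF X_meas g] measurable_stopped_prod_process[OF X_meas e_meas]
    by (simp_all add: comp_def)
  have e_mean: "(\<integral>\<^sup>+\<omega>. ennreal (e (X j \<omega>)) \<partial>M) \<le> 1" for j
  proof -
    have "e z = exp (l * (\<nu> - g z) - l\<^sup>2 * r\<^sup>2 / 8)" for z
      using \<open>0 < r\<close> by (simp add: e_def \<gamma>_def l_def power2_eq_square field_simps)
    then show ?thesis
      unfolding \<nu>_def r_def using nn_integral_hoeffding_factor_le_1[OF Q X_meas X_distr g g_bounds \<open>0 < l\<close>]
      by simp
  qed
  have "{\<omega>\<in>space M. \<exists>k. n \<le> k \<and> k \<le> N \<and> (\<Sum>i<k. g (X i \<omega>)) \<le> 0}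
          \<subseteq> {\<omega>\<in>space M. C \<le> stopped_prod C e N (\<lambda>i. X i \<omega>)}"
  proof safe
    fix \<omega> k assume k: "n \<le> k" "k \<le> N" "(\<Sum>i<k. g (X i \<omega>)) \<le> 0"
    then have "C \<le> (\<Prod>i<k. e (X i \<omega>))"
      using exp_tilted_prod_ge[OF \<open>0 < l\<close> \<open>0 \<le> \<gamma>\<close> k(1), of "\<lambda>i. g (X i \<omega>)"]
      by (simp add: C_def e_def)
    then have "C \<le> stopped_prod C e k (\<lambda>i. X i \<omega>)"
      using stopped_prod_ge_or_eq_prod[of C e k "\<lambda>i. X i \<omega>"] by auto
    then show "C \<le> stopped_prod C e N (\<lambda>i. X i \<omega>)"
      using stopped_prod_ge_mono \<open>k \<le> N\<close> by blast
  qed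
  then have "measure M {\<omega>\<in>space M. \<exists>k. n \<le> k \<and> k \<le> N \<and> (\<Sum>i<k. g (X i \<omega>)) \<le> 0}
      \<le> measure M {\<omega>\<in>space M. C \<le> stopped_prod C e N (\<lambda>i. X i \<omega>)}"
    by (rule finite_measure_mono) measurable
  also have "\<dots> \<le> 1 / C"
    by (rule measure_stopped_prod_ge_le[OF X_meas X_indep e_meas _ e_mean]) (simp_all add: e_def C_def)
  also have "\<dots> = exp (-2 * real n * (integral\<^sup>L Q g)\<^sup>2 / (\<beta> - \<alpha>)\<^sup>2)"
    by (simp add: C_def \<gamma>_def \<nu>_def r_def exp_minus field_simps)
  finally show ?thesis .
qed

lemma (in prob_space) maximal_hoeffding:
  assumes Q: "prob_space Q"
    and X_meas: "\<And>i. X i \<in> measurable M Q" and X_distr: "\<And>i. distr M Q (X i) = Q"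
    and X_indep: "indep_vars (\<lambda>_. Q) X UNIV"
    and g[measurable]: "g \<in> borel_measurable Q" and g_bounds: "AE x in Q. \<alpha> \<le> g x \<and> g x \<le> \<beta>"
    and "\<alpha> < \<beta>" and mean_nonneg: "0 \<le> integral\<^sup>L Q g"
  shows "measure M {\<omega>\<in>space M. \<exists>k\<ge>n. (\<Sum>i<k. g (X i \<omega>)) \<le> 0}
           \<le> exp (-2 * real n * (integral\<^sup>L Q g)\<^sup>2 / (\<beta> - \<alpha>)\<^sup>2)"
proof (cases "integral\<^sup>L Q g = 0")
  case False
  define hits where "hits N = {\<omega>\<in>space M. \<exists>k. n \<le> k \<and> k \<le> N \<and> (\<Sum>i<k. g (X i \<omega>)) \<le> 0}" for N
  have [measurable]: "(\<lambda>\<omega>. g (X i \<omega>)) \<in> borel_measurable M" for i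
    using measurable_comp[OF X_meas g] by (simp add: comp_def)
  have "(\<lambda>N. measure M (hits N)) \<longlonglongrightarrow> measure M (\<Union>N. hits N)"
    by (rule finite_Lim_measure_incseq) (auto simp: hits_def incseq_def)
  moreover have "(\<Union>N. hits N) = {\<omega>\<in>space M. \<exists>k\<ge>n. (\<Sum>i<k. g (X i \<omega>)) \<le> 0}"
    by (auto simp: hits_def)
  moreover have "measure M (hits N) \<le> exp (-2 * real n * (integral\<^sup>L Q g)\<^sup>2 / (\<beta> - \<alpha>)\<^sup>2)" for N
    unfolding hits_def using False mean_nonneg
    by (intro maximal_hoeffding_up_to[OF Q X_meas X_distr X_indep g g_bounds \<open>\<alpha> < \<beta>\<close>]) simp
  ultimately show ?thesis
    by (metis LIMSEQ_le_const2)
qed (simp add: measure_le_1)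

section \<open>Passing to the limit\<close>

lemma eexp_PInf [simp]: "eexp \<infinity> = \<infinity>"
  by (metis PInfty_eq_infinity eexp.simps(2))

lemma eexp_MInf [simp]: "eexp (-\<infinity>) = 0"
  by (metis MInfty_eq_minfinity eexp.simps(3))

lemma eexp_nonneg: "0 \<le> eexp z"
  by (cases z) auto

lemma exp_neg_sq_ratio_tendsto_0:
  assumes "filterlim u at_top sequentially" and "(v \<longlongrightarrow> r) sequentially" "0 < (r :: real)"
  shows "((\<lambda>n. exp (-2 * (u n)\<^sup>2 / (v n)\<^sup>2)) \<longlongrightarrow> 0) sequentially"
proof -
  have "filterlim (\<lambda>n. (2 / (v n)\<^sup>2) * (u n)\<^sup>2) at_top sequentially"
    using assms
    by (intro filterlim_tendsto_pos_mult_at_top[where c = "2 / r\<^sup>2"] filterlim_pow_at_top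
              tendsto_intros) auto
  then show ?thesis
    by (auto intro: filterlim_compose[OF exp_at_bot] simp: filterlim_uminus_at_top field_simps)
qed

lemma limsup_le_eexp_of_exp_bound:
  fixes p u v :: "nat \<Rightarrow> real" and d d' :: ereal
  assumes p_le: "eventually (\<lambda>n. p n \<le> exp (-2 * (u n)\<^sup>2 / (v n)\<^sup>2)) sequentially"
    and u_nonneg: "\<And>n. 0 \<le> u n" and u_lim: "((\<lambda>n. ereal (u n)) \<longlongrightarrow> d) sequentially"
    and v_lim: "(v \<longlongrightarrow> r) sequentially" and "0 < r"
    and c: "0 < c" "c \<le> 2 / r\<^sup>2" and d': "0 \<le> d'" "d' \<le> d"
  shows "limsup (\<lambda>n. ereal (p n)) \<le> eexp (- ereal c * d'\<^sup>2)"
proof -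
  define q where "q n = exp (-2 * (u n)\<^sup>2 / (v n)\<^sup>2)" for n
  have "limsup (\<lambda>n. ereal (p n)) \<le> limsup (\<lambda>n. ereal (q n))"
    by (rule Limsup_mono) (use p_le in \<open>auto elim!: eventually_mono simp: q_def\<close>)
  also have "\<dots> \<le> eexp (- ereal c * d'\<^sup>2)"
  proof (cases d)
    case (real d\<^sub>0)
    then have "u \<longlonglongrightarrow> d\<^sub>0" using u_lim by (simp add: lim_ereal)
    moreover from d' real obtain d\<^sub>1 where d\<^sub>1: "d' = ereal d\<^sub>1" "0 \<le> d\<^sub>1" "d\<^sub>1 \<le> d\<^sub>0"
      by (cases d') auto
    ultimately have "(\<lambda>n. ereal (q n)) \<longlonglongrightarrow> ereal (exp (-2 * d\<^sub>0\<^sup>2 / r\<^sup>2))"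
      unfolding q_def lim_ereal using \<open>0 < r\<close> by (intro tendsto_intros v_lim) auto
    then have "limsup (\<lambda>n. ereal (q n)) = ereal (exp (-2 * d\<^sub>0\<^sup>2 / r\<^sup>2))"
      by (intro lim_imp_Limsup) auto
    also have "\<dots> \<le> ereal (exp (- (c * d\<^sub>1\<^sup>2)))"
    proof -
      have "c * d\<^sub>1\<^sup>2 \<le> (2 / r\<^sup>2) * d\<^sub>0\<^sup>2"
        using c d\<^sub>1 by (intro mult_mono power_mono) auto
      then show ?thesis by (simp add: field_simps)
    qed
    also have "\<dots> = eexp (- ereal c * d'\<^sup>2)"
      by (simp add: d\<^sub>1 power2_eq_square)
    finally show ?thesis .
  next
    case PInf
    then have "filterlim u at_top sequentially"
      using u_lim by (simp add: tendsto_PInfty_eq_at_top)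
    then have "q \<longlonglongrightarrow> 0"
      unfolding q_def by (rule exp_neg_sq_ratio_tendsto_0[OF _ v_lim \<open>0 < r\<close>])
    then have "limsup (\<lambda>n. ereal (q n)) = 0"
      by (intro lim_imp_Limsup) (auto simp: zero_ereal_def lim_ereal)
    then show ?thesis using eexp_nonneg by simp
  next
    case MInf
    moreover have "0 \<le> d"
      by (rule LIMSEQ_le_const[OF u_lim]) (use u_nonneg in auto)
    ultimately show ?thesis by simp
  qed
  finally show ?thesis .
qed

lemma (in prob_space) limsup_maximal_hoeffding:
  fixes g :: "nat \<Rightarrow> 's \<Rightarrow> real"
  assumes Q: "prob_space Q"
    and X_meas: "\<And>i. X i \<in> measurable M Q" and X_distr: "\<And>i. distr M Q (X i) = Q"
    and X_indep: "indep_vars (\<lambda>_. Q) X UNIV"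
    and g: "\<And>n. g n \<in> borel_measurable Q"
    and g_bounds: "\<And>n. AE x in Q. \<alpha> n \<le> g n x \<and> g n x \<le> \<beta> n" and width_pos: "\<And>n. \<alpha> n < \<beta> n"
    and mean_nonneg: "\<And>n. 0 \<le> integral\<^sup>L Q (g n)"
    and mean_lim: "((\<lambda>n. ereal (sqrt (real n) * integral\<^sup>L Q (g n))) \<longlongrightarrow> d) sequentially"
    and width_lim: "((\<lambda>n. \<beta> n - \<alpha> n) \<longlongrightarrow> r) sequentially" and "0 < r"
    and c: "0 < c" "c \<le> 2 / r\<^sup>2" and d': "0 \<le> d'" "d' \<le> d"
  shows "limsup (\<lambda>n. ereal (measure M {\<omega>\<in>space M. \<exists>k\<ge>n. (\<Sum>i<k. g n (X i \<omega>)) \<le> 0}))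
           \<le> eexp (- ereal c * d'\<^sup>2)"
proof (rule limsup_le_eexp_of_exp_bound[OF _ _ mean_lim width_lim \<open>0 < r\<close> c d'])
  show "\<forall>\<^sub>F n in sequentially. measure M {\<omega>\<in>space M. \<exists>k\<ge>n. (\<Sum>i<k. g n (X i \<omega>)) \<le> 0}
          \<le> exp (-2 * (sqrt (real n) * integral\<^sup>L Q (g n))\<^sup>2 / (\<beta> n - \<alpha> n)\<^sup>2)"
  proof (intro always_eventually allI)
    fix n
    show "measure M {\<omega>\<in>space M. \<exists>k\<ge>n. (\<Sum>i<k. g n (X i \<omega>)) \<le> 0}
          \<le> exp (-2 * (sqrt (real n) * integral\<^sup>L Q (g n))\<^sup>2 / (\<beta> n - \<alpha> n)\<^sup>2)"
      using maximal_hoeffding[OF Q X_meas X_distr X_indep g g_bounds width_pos mean_nonneg, of n]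
      by (simp add: power_mult_distrib mult.assoc)
  qed
qed (use mean_nonneg in simp)

lemma sets_random_walk_nonpos_after:
  fixes g :: "'s \<Rightarrow> real" and X :: "nat \<Rightarrow> 'w \<Rightarrow> 's"
  assumes "\<And>i. X i \<in> measurable P Q" and "g \<in> borel_measurable Q"
  shows "{\<omega>\<in>space P. \<exists>k\<ge>n. (\<Sum>i<k. g (X i \<omega>)) \<le> 0} \<in> sets P"
proof -
  have [measurable]: "(\<lambda>\<omega>. g (X i \<omega>)) \<in> borel_measurable P" for i
    using measurable_comp[OF assms] by (simp add: comp_def)
  show ?thesis by measurable
qed

lemma ereal_mult_SUP_gtD:
  assumes "0 < c" and "ereal c * (SUP k\<in>K. ereal (f k)) > ereal x"
  shows "\<exists>k\<in>K. x / c < f k"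
proof (rule ccontr)
  assume "\<not> ?thesis"
  then have "(SUP k\<in>K. ereal (f k)) \<le> ereal (x / c)"
    by (auto intro!: SUP_least)
  then have "ereal c * (SUP k\<in>K. ereal (f k)) \<le> ereal c * ereal (x / c)"
    using \<open>0 < c\<close> by (intro ereal_mult_left_mono) auto
  with assms show False by simp
qed

lemma ereal_mult_INF_ltD:
  assumes "0 < c" and "ereal c * (INF k\<in>K. ereal (f k)) < ereal x"
  shows "\<exists>k\<in>K. f k < x / c"
proof (rule ccontr)
  assume "\<not> ?thesis"
  then have "ereal (x / c) \<le> (INF k\<in>K. ereal (f k))"
    by (auto intro!: INF_greatest)
  then have "ereal c * ereal (x / c) \<le> ereal c * (INF k\<in>K. ereal (f k))"
    using \<open>0 < c\<close> by (intro ereal_mult_left_mono) auto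
  with assms show False by simp
qed

lemma (in finite_measure) limsup_measure_mono:
  assumes "eventually (\<lambda>n. A n \<subseteq> B n) sequentially" and "\<And>n. B n \<in> sets M"
  shows "limsup (\<lambda>n. ereal (measure M (A n))) \<le> limsup (\<lambda>n. ereal (measure M (B n)))"
  using assms(1) by (intro Limsup_mono) (auto elim!: eventually_mono intro: finite_measure_mono assms(2))

section \<open>Convex M-estimation\<close>

locale convex_m_estimation =
  Q: prob_space Q + P: prob_space P
  for Q :: "'s measure" and P :: "'w measure" +
  fixes h :: "'s \<Rightarrow> real \<Rightarrow> real" and t0 m :: real
    and X :: "nat \<Rightarrow> 'w \<Rightarrow> 's" and mhat :: "nat \<Rightarrow> 'w \<Rightarrow> real"
    and a b :: "real \<Rightarrow> real" and an :: "nat \<Rightarrow> real" and \<delta> :: "real \<Rightarrow> ereal"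
  assumes h_meas[measurable]: "\<And>t. (\<lambda>x. h x t) \<in> borel_measurable Q"
    and h_convex: "\<And>x. x \<in> space Q \<Longrightarrow> convex_on UNIV (h x)"
    and int_Dplus: "\<And>t. integrable Q (\<lambda>x. Dplus (h x) t)"
    and X_meas: "\<And>i. X i \<in> measurable P Q"
    and X_distr: "\<And>i. distr P Q (X i) = Q"
    and X_indep: "P.indep_vars (\<lambda>_. Q) X UNIV"
    and mhat_min: "\<And>n \<omega> t. n \<ge> 1 \<Longrightarrow> \<omega> \<in> space P \<Longrightarrow>
                      empM h t0 X n \<omega> (mhat n \<omega>) \<le> empM h t0 X n \<omega> t"
    and mhat_smallest: "\<And>n \<omega> t. n \<ge> 1 \<Longrightarrow> \<omega> \<in> space P \<Longrightarrow>
                      empM h t0 X n \<omega> t \<le> empM h t0 X n \<omega> (mhat n \<omega>) \<Longrightarrow> mhat n \<omega> \<le> t"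
    and m_crit: "Dminus (popM Q h t0) m \<le> 0" "0 \<le> Dplus (popM Q h t0) m"
    and B: "\<And>x. x \<noteq> 0 \<Longrightarrow> a x < b x \<and>
              (AE \<omega> in P. a x \<le> Dplus (h (X 0 \<omega>)) (m + x) \<and> Dplus (h (X 0 \<omega>)) (m + x) \<le> b x)"
    and an_pos: "\<And>n. an n > 0"
    and an_lim: "filterlim an at_top sequentially"
    and \<delta>_lim: "\<And>x. ((\<lambda>n. ereal (sqrt (real n) * Dplus (popM Q h t0) (m + x / an n))) \<longlongrightarrow> \<delta> x) sequentially"
begin

lemma Dplus_h_measurable[measurable]: "(\<lambda>x. Dplus (h x) t) \<in> borel_measurable Q"
  using int_Dplus by auto

lemma X_in_space: "\<omega> \<in> space P \<Longrightarrow> X i \<omega> \<in> space Q"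
  using measurable_space[OF X_meas] .

lemma integrable_h_diff: "integrable Q (\<lambda>x. h x u - h x v)"
proof (rule Bochner_Integration.integrable_bound)
  show "integrable Q (\<lambda>x. \<bar>Dplus (h x) v * (u - v)\<bar> + \<bar>Dplus (h x) u * (u - v)\<bar>)"
    using int_Dplus by auto
  show "AE x in Q. norm (h x u - h x v) \<le> norm (\<bar>Dplus (h x) v * (u - v)\<bar> + \<bar>Dplus (h x) u * (u - v)\<bar>)"
  proof (rule AE_I2)
    fix x assume "x \<in> space Q"
    then have "h x v + Dplus (h x) v * (u - v) \<le> h x u" "h x u + Dplus (h x) u * (v - u) \<le> h x v"
      using convex_on_Dplus_subgradient[OF h_convex] by blast+
    then show "norm (h x u - h x v) \<le> norm (\<bar>Dplus (h x) v * (u - v)\<bar> + \<bar>Dplus (h x) u * (u - v)\<bar>)"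
      by (simp add: abs_le_iff algebra_simps) linarith
  qed
qed simp

lemma popM_diff: "popM Q h t0 u - popM Q h t0 v = (\<integral>x. h x u - h x v \<partial>Q)"
  unfolding popM_def
  by (subst Bochner_Integration.integral_diff[symmetric])
     (auto intro!: integrable_h_diff Bochner_Integration.integral_cong)

lemma convex_popM: "convex_on UNIV (popM Q h t0)"
proof (rule convex_onI)
  fix t x y :: real assume t: "0 < t" "t < 1"
  have "popM Q h t0 ((1 - t) *\<^sub>R x + t *\<^sub>R y) = (\<integral>z. h z ((1 - t) * x + t * y) - h z t0 \<partial>Q)"
    by (simp add: popM_def)
  also have "\<dots> \<le> (\<integral>z. (1 - t) * (h z x - h z t0) + t * (h z y - h z t0) \<partial>Q)"
  proof (rule integral_mono)
    fix z assume "z \<in> space Q"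
    then have "h z ((1 - t) *\<^sub>R x + t *\<^sub>R y) \<le> (1 - t) * h z x + t * h z y"
      using convex_onD[OF h_convex, of z t x y] t by simp
    then show "h z ((1 - t) * x + t * y) - h z t0 \<le> (1 - t) * (h z x - h z t0) + t * (h z y - h z t0)"
      by (simp add: algebra_simps)
  qed (auto intro!: integrable_h_diff)
  also have "\<dots> = (1 - t) * popM Q h t0 x + t * popM Q h t0 y"
    unfolding popM_def by (subst Bochner_Integration.integral_add) (auto intro!: integrable_h_diff)
  finally show "popM Q h t0 ((1 - t) *\<^sub>R x + t *\<^sub>R y) \<le> (1 - t) * popM Q h t0 x + t * popM Q h t0 y" .
qed simp

text \<open>Differentiation under the integral: by convexity the difference quotients decrease
  to \<open>D\<^sup>+h(x, t)\<close> and are dominated by \<open>|D\<^sup>+h(x, t)| + |h(x, t + 1) - h(x, t)|\<close>.\<close>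
lemma Dplus_popM: "Dplus (popM Q h t0) t = (\<integral>x. Dplus (h x) t \<partial>Q)"
proof (rule tendsto_unique[OF _ convex_on_Dplus_tendsto[OF convex_popM]])
  let ?q = "\<lambda>s x. (h x (t + s) - h x t) / s"
  show "((\<lambda>s. (popM Q h t0 (t + s) - popM Q h t0 t) / s) \<longlongrightarrow> (\<integral>x. Dplus (h x) t \<partial>Q)) (at_right 0)"
  proof (rule tendsto_at_right_sequentially[of 0 1])
    fix S :: "nat \<Rightarrow> real" assume S: "\<And>n. 0 < S n" "\<And>n. S n < 1" "decseq S" "S \<longlonglongrightarrow> 0"
    have S_at_right: "filterlim S (at_right 0) sequentially"
      by (rule tendsto_imp_filterlim_at_right[OF S(4)]) (use S(1) in auto)
    have "(\<lambda>n. \<integral>x. ?q (S n) x \<partial>Q) \<longlonglongrightarrow> (\<integral>x. Dplus (h x) t \<partial>Q)"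
    proof (rule integral_dominated_convergence[where w = "\<lambda>x. \<bar>Dplus (h x) t\<bar> + \<bar>h x (t + 1) - h x t\<bar>"])
      show "integrable Q (\<lambda>x. \<bar>Dplus (h x) t\<bar> + \<bar>h x (t + 1) - h x t\<bar>)"
        using int_Dplus integrable_h_diff by auto
      show "AE x in Q. (\<lambda>n. ?q (S n) x) \<longlonglongrightarrow> Dplus (h x) t"
        using filterlim_compose[OF convex_on_Dplus_tendsto[OF h_convex] S_at_right] by auto
      show "AE x in Q. norm (?q (S n) x) \<le> \<bar>Dplus (h x) t\<bar> + \<bar>h x (t + 1) - h x t\<bar>" for n
      proof (rule AE_I2)
        fix x assume "x \<in> space Q"
        then have "Dplus (h x) t \<le> ?q (S n) x" "?q (S n) x \<le> ?q 1 x"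
          using convex_on_Dplus_le_slope[OF h_convex S(1)]
                convex_on_slope_mono_right[OF h_convex S(1) less_imp_le[OF S(2)]]
          by blast+
        then show "norm (?q (S n) x) \<le> \<bar>Dplus (h x) t\<bar> + \<bar>h x (t + 1) - h x t\<bar>"
          by (simp add: abs_le_iff)
      qed
    qed simp_all
    then show "(\<lambda>n. (popM Q h t0 (t + S n) - popM Q h t0 t) / S n) \<longlonglongrightarrow> (\<integral>x. Dplus (h x) t \<partial>Q)"
      by (simp add: popM_diff)
  qed simp
qed simp

lemma empM_diff:
  "empM h t0 X n \<omega> u - empM h t0 X n \<omega> v = (1 / real n) * (\<Sum>i<n. h (X i \<omega>) u - h (X i \<omega>) v)"
  unfolding empM_def right_diff_distrib[symmetric] sum_subtractf[symmetric] by simp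

lemma sum_Dplus_neg_if_less_mhat:
  assumes "n \<ge> 1" "\<omega> \<in> space P" "t < mhat n \<omega>"
  shows "(\<Sum>i<n. Dplus (h (X i \<omega>)) t) < 0"
proof (rule ccontr)
  assume "\<not> ?thesis"
  then have "0 \<le> (\<Sum>i<n. Dplus (h (X i \<omega>)) t) * (mhat n \<omega> - t)"
    using assms(3) by simp
  also have "\<dots> \<le> (\<Sum>i<n. h (X i \<omega>) (mhat n \<omega>) - h (X i \<omega>) t)"
    unfolding sum_distrib_right
    using convex_on_Dplus_subgradient[OF h_convex[OF X_in_space[OF assms(2)]]]
    by (intro sum_mono) (simp add: algebra_simps)
  finally have "0 \<le> (1 / real n) * (\<Sum>i<n. h (X i \<omega>) (mhat n \<omega>) - h (X i \<omega>) t)"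
    by simp
  then have "empM h t0 X n \<omega> t \<le> empM h t0 X n \<omega> (mhat n \<omega>)"
    using empM_diff[of n \<omega> "mhat n \<omega>" t] by simp
  with assms show False
    using mhat_smallest by fastforce
qed

lemma sum_Dplus_nonneg_if_greater_mhat:
  assumes "n \<ge> 1" "\<omega> \<in> space P" "mhat n \<omega> < t"
  shows "0 \<le> (\<Sum>i<n. Dplus (h (X i \<omega>)) t)"
proof (rule ccontr)
  let ?m = "mhat n \<omega>"
  assume "\<not> ?thesis"
  have convex: "convex_on UNIV (h (X i \<omega>))" for i
    by (rule h_convex[OF X_in_space[OF assms(2)]])
  have "((\<lambda>s. \<Sum>i<n. (h (X i \<omega>) (t + s) - h (X i \<omega>) t) / s) \<longlongrightarrow> (\<Sum>i<n. Dplus (h (X i \<omega>)) t)) (at_right 0)"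
    by (intro tendsto_sum convex_on_Dplus_tendsto[OF convex])
  with \<open>\<not> ?thesis\<close> have "\<forall>\<^sub>F s in at_right 0. (\<Sum>i<n. (h (X i \<omega>) (t + s) - h (X i \<omega>) t) / s) < 0 \<and> 0 < s"
    by (intro eventually_conj order_tendstoD(2) eventually_at_right_less) auto
  then obtain s where s: "(\<Sum>i<n. (h (X i \<omega>) (t + s) - h (X i \<omega>) t) / s) < 0" "0 < s"
    using eventually_happens[of _ "at_right (0::real)"] by auto
  have "(\<Sum>i<n. (h (X i \<omega>) t - h (X i \<omega>) ?m) / (t - ?m)) \<le> (\<Sum>i<n. (h (X i \<omega>) (t + s) - h (X i \<omega>) t) / s)"
    by (intro sum_mono convex_on_slope_le_right_slope[OF convex assms(3) s(2)])
  with s have "(\<Sum>i<n. h (X i \<omega>) t - h (X i \<omega>) ?m) / (t - ?m) < 0"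
    by (simp add: sum_divide_distrib)
  with assms(3) have "(\<Sum>i<n. h (X i \<omega>) t - h (X i \<omega>) ?m) < 0"
    by (simp add: divide_less_0_iff)
  with assms(1) have "(1 / real n) * (\<Sum>i<n. h (X i \<omega>) t - h (X i \<omega>) ?m) < 0"
    by (simp add: divide_neg_pos)
  then have "empM h t0 X n \<omega> t < empM h t0 X n \<omega> ?m"
    using empM_diff[of n \<omega> t ?m] by simp
  with mhat_min[OF assms(1,2), of t] show False by simp
qed

lemma AE_Dplus_bounds:
  assumes "x \<noteq> 0"
  shows "AE z in Q. a x \<le> Dplus (h z) (m + x) \<and> Dplus (h z) (m + x) \<le> b x"
proof -
  have "AE z in distr P Q (X 0). a x \<le> Dplus (h z) (m + x) \<and> Dplus (h z) (m + x) \<le> b x"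
    using B[OF assms] by (subst AE_distr_iff[OF X_meas]) simp_all
  then show ?thesis unfolding X_distr .
qed

lemma Dplus_popM_right_nonneg: "0 < y \<Longrightarrow> 0 \<le> Dplus (popM Q h t0) (m + y)"
  using m_crit(2) convex_on_Dplus_mono[OF convex_popM, of m "m + y"] by simp

lemma Dplus_popM_left_nonpos: "y < 0 \<Longrightarrow> Dplus (popM Q h t0) (m + y) \<le> 0"
  using m_crit(1) convex_on_Dplus_le_Dminus[OF convex_popM, of "m + y" m] by simp

lemma \<delta>_nonneg: "0 < x \<Longrightarrow> 0 \<le> \<delta> x"
proof (rule LIMSEQ_le_const[OF \<delta>_lim], intro exI allI impI)
  fix n assume "0 < x"
  with an_pos[of n] show "0 \<le> ereal (sqrt (real n) * Dplus (popM Q h t0) (m + x / an n))"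
    using Dplus_popM_right_nonneg[of "x / an n"] by simp
qed

lemma \<delta>_nonpos: "x < 0 \<Longrightarrow> \<delta> x \<le> 0"
proof (rule LIMSEQ_le_const2[OF \<delta>_lim], intro exI allI impI)
  fix n assume "x < 0"
  with an_pos[of n] show "ereal (sqrt (real n) * Dplus (popM Q h t0) (m + x / an n)) \<le> 0"
    using Dplus_popM_left_nonpos[of "x / an n"] by (simp add: divide_neg_pos mult_nonneg_nonpos)
qed

lemma scaled_tendsto_0: "((\<lambda>n. x / an n) \<longlongrightarrow> 0) sequentially"
  using tendsto_mult[OF tendsto_const[of x] tendsto_inverse_0_at_top[OF an_lim]]
  by (simp add: divide_inverse)

lemma scaled_at_right: "0 < x \<Longrightarrow> filterlim (\<lambda>n. x / an n) (at_right 0) sequentially"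
  using an_pos by (intro tendsto_imp_filterlim_at_right[OF scaled_tendsto_0] always_eventually) simp

lemma scaled_at_left: "x < 0 \<Longrightarrow> filterlim (\<lambda>n. x / an n) (at_left 0) sequentially"
  using an_pos
  by (intro tendsto_imp_filterlim_at_left[OF scaled_tendsto_0] always_eventually) (simp add: divide_neg_pos)

lemma limsup_prob_walk_nonpos_right:
  assumes "0 < x" and a_lim: "(a \<longlongrightarrow> \<alpha>) (at_right 0)" and b_lim: "(b \<longlongrightarrow> \<beta>) (at_right 0)"
    and "\<alpha> < \<beta>" and c: "0 < c" "c \<le> 2 / (\<beta> - \<alpha>)\<^sup>2" and d': "0 \<le> d'" "d' \<le> \<delta> x"
  shows "limsup (\<lambda>n. ereal (measure P {\<omega>\<in>space P. \<exists>k\<ge>n. (\<Sum>i<k. Dplus (h (X i \<omega>)) (m + x / an n)) \<le> 0}))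
           \<le> eexp (- ereal c * d'\<^sup>2)"
proof (rule P.limsup_maximal_hoeffding[OF Q.prob_space_axioms X_meas X_distr X_indep,
      where g = "\<lambda>n z. Dplus (h z) (m + x / an n)" and \<alpha> = "\<lambda>n. a (x / an n)" and \<beta> = "\<lambda>n. b (x / an n)"])
  have "x / an n \<noteq> 0" for n using \<open>0 < x\<close> an_pos[of n] by simp
  then show "AE z in Q. a (x / an n) \<le> Dplus (h z) (m + x / an n) \<and> Dplus (h z) (m + x / an n) \<le> b (x / an n)"
    and "a (x / an n) < b (x / an n)" for n
    using AE_Dplus_bounds B by blast+
  show "0 \<le> integral\<^sup>L Q (\<lambda>z. Dplus (h z) (m + x / an n))" for n
    using Dplus_popM_right_nonneg[of "x / an n"] \<open>0 < x\<close> an_pos[of n] by (simp add: Dplus_popM)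
  show "((\<lambda>n. ereal (sqrt (real n) * integral\<^sup>L Q (\<lambda>z. Dplus (h z) (m + x / an n)))) \<longlongrightarrow> \<delta> x) sequentially"
    using \<delta>_lim[of x] by (simp add: Dplus_popM)
  show "((\<lambda>n. b (x / an n) - a (x / an n)) \<longlongrightarrow> \<beta> - \<alpha>) sequentially"
    using scaled_at_right[OF \<open>0 < x\<close>]
    by (intro tendsto_diff filterlim_compose[OF b_lim] filterlim_compose[OF a_lim])
qed (use \<open>\<alpha> < \<beta>\<close> c d' in auto)

lemma limsup_prob_walk_nonneg_left:
  assumes "x < 0" and a_lim: "(a \<longlongrightarrow> \<alpha>) (at_left 0)" and b_lim: "(b \<longlongrightarrow> \<beta>) (at_left 0)"
    and "\<alpha> < \<beta>" and c: "0 < c" "c \<le> 2 / (\<beta> - \<alpha>)\<^sup>2" and d': "0 \<le> d'" "d' \<le> - \<delta> x"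
  shows "limsup (\<lambda>n. ereal (measure P {\<omega>\<in>space P. \<exists>k\<ge>n. (\<Sum>i<k. - Dplus (h (X i \<omega>)) (m + x / an n)) \<le> 0}))
           \<le> eexp (- ereal c * d'\<^sup>2)"
proof (rule P.limsup_maximal_hoeffding[OF Q.prob_space_axioms X_meas X_distr X_indep,
      where g = "\<lambda>n z. - Dplus (h z) (m + x / an n)" and \<alpha> = "\<lambda>n. - b (x / an n)" and \<beta> = "\<lambda>n. - a (x / an n)"])
  have "x / an n \<noteq> 0" for n using \<open>x < 0\<close> an_pos[of n] by simp
  then show "AE z in Q. - b (x / an n) \<le> - Dplus (h z) (m + x / an n) \<and> - Dplus (h z) (m + x / an n) \<le> - a (x / an n)"
    and "- b (x / an n) < - a (x / an n)" for n
    using AE_Dplus_bounds B by (auto elim!: eventually_mono)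
  show "0 \<le> integral\<^sup>L Q (\<lambda>z. - Dplus (h z) (m + x / an n))" for n
    using Dplus_popM_left_nonpos[of "x / an n"] \<open>x < 0\<close> an_pos[of n]
    by (simp add: Dplus_popM divide_neg_pos)
  show "((\<lambda>n. ereal (sqrt (real n) * integral\<^sup>L Q (\<lambda>z. - Dplus (h z) (m + x / an n)))) \<longlongrightarrow> - \<delta> x) sequentially"
    using tendsto_uminus_ereal[OF \<delta>_lim[of x]] by (simp add: Dplus_popM)
  show "((\<lambda>n. - a (x / an n) - - b (x / an n)) \<longlongrightarrow> \<beta> - \<alpha>) sequentially"
    using scaled_at_left[OF \<open>x < 0\<close>]
    by (simp, intro tendsto_diff filterlim_compose[OF b_lim] filterlim_compose[OF a_lim])
qed (use \<open>\<alpha> < \<beta>\<close> c d' in auto)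

lemma sets_walk_Dplus_nonpos:
  "{\<omega>\<in>space P. \<exists>k\<ge>n. (\<Sum>i<k. Dplus (h (X i \<omega>)) t) \<le> 0} \<in> sets P"
  "{\<omega>\<in>space P. \<exists>k\<ge>n. (\<Sum>i<k. - Dplus (h (X i \<omega>)) t) \<le> 0} \<in> sets P"
  by (rule sets_random_walk_nonpos_after[where g = "\<lambda>z. Dplus (h z) t", OF X_meas], simp)
     (rule sets_random_walk_nonpos_after[where g = "\<lambda>z. - Dplus (h z) t", OF X_meas], simp)

lemma sup_deviation_event_subset:
  assumes "n \<ge> 1"
  shows "{\<omega>\<in>space P. ereal (an n) * (SUP k\<in>{n..}. ereal (mhat k \<omega> - m)) > ereal x}
           \<subseteq> {\<omega>\<in>space P. \<exists>k\<ge>n. (\<Sum>i<k. Dplus (h (X i \<omega>)) (m + x / an n)) \<le> 0}"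
proof safe
  fix \<omega> assume "\<omega> \<in> space P" and "ereal (an n) * (SUP k\<in>{n..}. ereal (mhat k \<omega> - m)) > ereal x"
  then obtain k where "k \<ge> n" "m + x / an n < mhat k \<omega>"
    using ereal_mult_SUP_gtD[OF an_pos] by fastforce
  with assms \<open>\<omega> \<in> space P\<close> show "\<exists>k\<ge>n. (\<Sum>i<k. Dplus (h (X i \<omega>)) (m + x / an n)) \<le> 0"
    using sum_Dplus_neg_if_less_mhat[of k \<omega> "m + x / an n"] by force
qed

lemma inf_deviation_event_subset:
  assumes "n \<ge> 1"
  shows "{\<omega>\<in>space P. ereal (an n) * (INF k\<in>{n..}. ereal (mhat k \<omega> - m)) < ereal x}
           \<subseteq> {\<omega>\<in>space P. \<exists>k\<ge>n. (\<Sum>i<k. - Dplus (h (X i \<omega>)) (m + x / an n)) \<le> 0}"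
proof safe
  fix \<omega> assume "\<omega> \<in> space P" and "ereal (an n) * (INF k\<in>{n..}. ereal (mhat k \<omega> - m)) < ereal x"
  then obtain k where "k \<ge> n" "mhat k \<omega> < m + x / an n"
    using ereal_mult_INF_ltD[OF an_pos] by fastforce
  with assms \<open>\<omega> \<in> space P\<close> show "\<exists>k\<ge>n. (\<Sum>i<k. - Dplus (h (X i \<omega>)) (m + x / an n)) \<le> 0"
    using sum_Dplus_nonneg_if_greater_mhat[of k \<omega> "m + x / an n"] by (force simp: sum_negf)
qed

lemma abs_deviation_event_subset:
  assumes "n \<ge> 1"
  shows "{\<omega>\<in>space P. ereal (an n) * (SUP k\<in>{n..}. ereal \<bar>mhat k \<omega> - m\<bar>) > ereal x}
           \<subseteq> {\<omega>\<in>space P. \<exists>k\<ge>n. (\<Sum>i<k. Dplus (h (X i \<omega>)) (m + x / an n)) \<le> 0}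
             \<union> {\<omega>\<in>space P. \<exists>k\<ge>n. (\<Sum>i<k. - Dplus (h (X i \<omega>)) (m + (- x) / an n)) \<le> 0}"
proof safe
  fix \<omega> assume "\<omega> \<in> space P" and "ereal (an n) * (SUP k\<in>{n..}. ereal \<bar>mhat k \<omega> - m\<bar>) > ereal x"
    and "\<not> (\<exists>k\<ge>n. (\<Sum>i<k. - Dplus (h (X i \<omega>)) (m + (- x) / an n)) \<le> 0)"
  moreover obtain k where "k \<ge> n" "x / an n < \<bar>mhat k \<omega> - m\<bar>"
    using ereal_mult_SUP_gtD[OF an_pos] calculation(2) by fastforce
  ultimately show "\<exists>k\<ge>n. (\<Sum>i<k. Dplus (h (X i \<omega>)) (m + x / an n)) \<le> 0"
    using assms sum_Dplus_neg_if_less_mhat[of k \<omega> "m + x / an n"]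
      sum_Dplus_nonneg_if_greater_mhat[of k \<omega> "m + (- x) / an n"]
    by (force simp: sum_negf abs_less_iff)
qed

lemma limsup_prob_sup_deviation:
  assumes "(a \<longlongrightarrow> \<alpha>) (at_right 0)" "(b \<longlongrightarrow> \<beta>) (at_right 0)" "\<alpha> < \<beta>" and "0 < x"
  shows "limsup (\<lambda>n. ereal (measure P {\<omega> \<in> space P.
                   ereal (an n) * (SUP k\<in>{n..}. ereal (mhat k \<omega> - m)) > ereal x}))
           \<le> eexp (- ereal (2 / (\<beta> - \<alpha>)\<^sup>2) * (\<delta> x)\<^sup>2)"
proof -
  have "limsup (\<lambda>n. ereal (measure P {\<omega> \<in> space P.
                   ereal (an n) * (SUP k\<in>{n..}. ereal (mhat k \<omega> - m)) > ereal x}))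
      \<le> limsup (\<lambda>n. ereal (measure P {\<omega>\<in>space P. \<exists>k\<ge>n. (\<Sum>i<k. Dplus (h (X i \<omega>)) (m + x / an n)) \<le> 0}))"
    by (rule P.limsup_measure_mono[OF eventually_sequentiallyI[of 1]])
       (simp_all add: sup_deviation_event_subset sets_walk_Dplus_nonpos)
  also have "\<dots> \<le> eexp (- ereal (2 / (\<beta> - \<alpha>)\<^sup>2) * (\<delta> x)\<^sup>2)"
    using assms \<delta>_nonneg[OF \<open>0 < x\<close>] by (intro limsup_prob_walk_nonpos_right) auto
  finally show ?thesis .
qed

lemma limsup_prob_inf_deviation:
  assumes "(a \<longlongrightarrow> \<alpha>) (at_left 0)" "(b \<longlongrightarrow> \<beta>) (at_left 0)" "\<alpha> < \<beta>" and "x < 0"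
  shows "limsup (\<lambda>n. ereal (measure P {\<omega> \<in> space P.
                   ereal (an n) * (INF k\<in>{n..}. ereal (mhat k \<omega> - m)) < ereal x}))
           \<le> eexp (- ereal (2 / (\<beta> - \<alpha>)\<^sup>2) * (\<delta> x)\<^sup>2)"
proof -
  have "limsup (\<lambda>n. ereal (measure P {\<omega> \<in> space P.
                   ereal (an n) * (INF k\<in>{n..}. ereal (mhat k \<omega> - m)) < ereal x}))
      \<le> limsup (\<lambda>n. ereal (measure P {\<omega>\<in>space P. \<exists>k\<ge>n. (\<Sum>i<k. - Dplus (h (X i \<omega>)) (m + x / an n)) \<le> 0}))"
    by (rule P.limsup_measure_mono[OF eventually_sequentiallyI[of 1]])
       (simp_all add: inf_deviation_event_subset sets_walk_Dplus_nonpos)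
  also have "\<dots> \<le> eexp (- ereal (2 / (\<beta> - \<alpha>)\<^sup>2) * (- \<delta> x)\<^sup>2)"
    using assms \<delta>_nonpos[OF \<open>x < 0\<close>] by (intro limsup_prob_walk_nonneg_left) auto
  also have "(- \<delta> x)\<^sup>2 = (\<delta> x)\<^sup>2"
    by (cases "\<delta> x") (simp_all add: power2_eq_square)
  finally show ?thesis .
qed

lemma limsup_prob_sup_abs_deviation:
  assumes "(a \<longlongrightarrow> \<alpha>p) (at_right 0)" "(b \<longlongrightarrow> \<beta>p) (at_right 0)" "\<alpha>p < \<beta>p"
    and "(a \<longlongrightarrow> \<alpha>m) (at_left 0)" "(b \<longlongrightarrow> \<beta>m) (at_left 0)" "\<alpha>m < \<beta>m"
    and "0 < x"
  shows "limsup (\<lambda>n. ereal (measure P {\<omega> \<in> space P.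
                   ereal (an n) * (SUP k\<in>{n..}. ereal \<bar>mhat k \<omega> - m\<bar>) > ereal x}))
           \<le> 2 * eexp (- ereal (2 / (max (\<beta>p - \<alpha>p) (\<beta>m - \<alpha>m))\<^sup>2) * (min (\<delta> x) (- \<delta> (- x)))\<^sup>2)"
proof -
  define \<tau> where "\<tau> = max (\<beta>p - \<alpha>p) (\<beta>m - \<alpha>m)"
  define \<Delta> where "\<Delta> = min (\<delta> x) (- \<delta> (- x))"
  define E where "E = eexp (- ereal (2 / \<tau>\<^sup>2) * \<Delta>\<^sup>2)"
  define up where "up n = {\<omega>\<in>space P. \<exists>k\<ge>n. (\<Sum>i<k. Dplus (h (X i \<omega>)) (m + x / an n)) \<le> 0}" for n
  define down where "down n = {\<omega>\<in>space P. \<exists>k\<ge>n. (\<Sum>i<k. - Dplus (h (X i \<omega>)) (m + (- x) / an n)) \<le> 0}" for n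
  have sets: "up n \<in> sets P" "down n \<in> sets P" for n
    unfolding up_def down_def by (simp_all add: sets_walk_Dplus_nonpos)
  have rate_pos: "0 < 2 / \<tau>\<^sup>2" and rate_le: "2 / \<tau>\<^sup>2 \<le> 2 / (\<beta>p - \<alpha>p)\<^sup>2" "2 / \<tau>\<^sup>2 \<le> 2 / (\<beta>m - \<alpha>m)\<^sup>2"
    using assms(3,6) by (auto simp: \<tau>_def intro!: divide_left_mono power_mono)
  have "0 \<le> \<Delta>" "\<Delta> \<le> \<delta> x" "\<Delta> \<le> - \<delta> (- x)"
    using \<delta>_nonneg[OF \<open>0 < x\<close>] \<delta>_nonpos[of "- x"] \<open>0 < x\<close> by (auto simp: \<Delta>_def)
  have "limsup (\<lambda>n. ereal (measure P {\<omega> \<in> space P.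
                   ereal (an n) * (SUP k\<in>{n..}. ereal \<bar>mhat k \<omega> - m\<bar>) > ereal x}))
      \<le> limsup (\<lambda>n. ereal (measure P (up n \<union> down n)))"
  proof (rule P.limsup_measure_mono[OF eventually_sequentiallyI[of 1]])
    show "{\<omega> \<in> space P. ereal (an n) * (SUP k\<in>{n..}. ereal \<bar>mhat k \<omega> - m\<bar>) > ereal x}
            \<subseteq> up n \<union> down n" if "1 \<le> n" for n
      unfolding up_def down_def by (rule abs_deviation_event_subset[OF that])
  qed (intro sets.Un sets)
  also have "\<dots> \<le> limsup (\<lambda>n. ereal (measure P (up n)) + ereal (measure P (down n)))"
    using measure_Un_le[OF sets] by (intro Limsup_mono always_eventually) simp
  also have "\<dots> \<le> limsup (\<lambda>n. ereal (measure P (up n))) + limsup (\<lambda>n. ereal (measure P (down n)))"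
    by (rule ereal_limsup_add_mono)
  also have "\<dots> \<le> E + E"
    unfolding up_def down_def E_def
    using limsup_prob_walk_nonpos_right[OF \<open>0 < x\<close> assms(1-3) rate_pos rate_le(1) \<open>0 \<le> \<Delta>\<close> \<open>\<Delta> \<le> \<delta> x\<close>]
      limsup_prob_walk_nonneg_left[of "- x", OF _ assms(4-6) rate_pos rate_le(2) \<open>0 \<le> \<Delta>\<close> \<open>\<Delta> \<le> - \<delta> (- x)\<close>]
      \<open>0 < x\<close>
    by (intro add_mono) auto
  also have "\<dots> = 2 * E"
    by (cases E) auto
  finally show ?thesis
    by (simp add: E_def \<tau>_def \<Delta>_def)
qed

end

theorem corollary4:
  fixes Q :: "'s measure" and P :: "'w measure"
    and h :: "'s \<Rightarrow> real \<Rightarrow> real" and t0 m :: real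
    and X :: "nat \<Rightarrow> 'w \<Rightarrow> 's" and mhat :: "nat \<Rightarrow> 'w \<Rightarrow> real"
    and a b :: "real \<Rightarrow> real" and an :: "nat \<Rightarrow> real" and \<delta> :: "real \<Rightarrow> ereal"
  assumes Q: "prob_space Q"
    and h_meas: "\<And>t. (\<lambda>x. h x t) \<in> borel_measurable Q"
    and h_convex: "\<And>x. x \<in> space Q \<Longrightarrow> convex_on UNIV (h x)"
    and int_Dplus: "\<And>t. integrable Q (\<lambda>x. Dplus (h x) t)"
    and int_Dminus: "\<And>t. integrable Q (\<lambda>x. Dminus (h x) t)"
    and P: "prob_space P"
    and X_meas: "\<And>i. X i \<in> measurable P Q"
    and X_distr: "\<And>i. distr P Q (X i) = Q"
    and X_indep: "prob_space.indep_vars P (\<lambda>_. Q) X UNIV"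
    and mhat_meas: "\<And>n. n \<ge> 1 \<Longrightarrow> mhat n \<in> borel_measurable P"
    and mhat_min: "\<And>n \<omega> t. n \<ge> 1 \<Longrightarrow> \<omega> \<in> space P \<Longrightarrow>
                      empM h t0 X n \<omega> (mhat n \<omega>) \<le> empM h t0 X n \<omega> t"
    and mhat_smallest: "\<And>n \<omega> t. n \<ge> 1 \<Longrightarrow> \<omega> \<in> space P \<Longrightarrow>
                      empM h t0 X n \<omega> t \<le> empM h t0 X n \<omega> (mhat n \<omega>) \<Longrightarrow> mhat n \<omega> \<le> t"
    and m_crit: "Dminus (popM Q h t0) m \<le> 0" "0 \<le> Dplus (popM Q h t0) m"
    and B: "\<And>x. x \<noteq> 0 \<Longrightarrow> a x < b x \<and>
              (AE \<omega> in P. a x \<le> Dplus (h (X 0 \<omega>)) (m + x) \<and> Dplus (h (X 0 \<omega>)) (m + x) \<le> b x)"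
    and an_pos: "\<And>n. an n > 0"
    and an_lim: "filterlim an at_top sequentially"
    and \<delta>_lim: "\<And>x. ((\<lambda>n. ereal (sqrt (real n) * Dplus (popM Q h t0) (m + x / an n))) \<longlongrightarrow> \<delta> x) sequentially"
  shows
    "(\<forall>\<alpha>p \<beta>p. (a \<longlongrightarrow> \<alpha>p) (at_right 0) \<and> (b \<longlongrightarrow> \<beta>p) (at_right 0) \<and> \<beta>p > \<alpha>p \<longrightarrow>
        (\<forall>x>0. limsup (\<lambda>n. ereal (measure P {\<omega> \<in> space P.
                   ereal (an n) * (SUP k\<in>{n..}. ereal (mhat k \<omega> - m)) > ereal x}))
              \<le> eexp (- ereal (2 / (\<beta>p - \<alpha>p)^2) * (\<delta> x)^2)))
   \<and> (\<forall>\<alpha>m \<beta>m. (a \<longlongrightarrow> \<alpha>m) (at_left 0) \<and> (b \<longlongrightarrow> \<beta>m) (at_left 0) \<and> \<beta>m > \<alpha>m \<longrightarrow>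
        (\<forall>x<0. limsup (\<lambda>n. ereal (measure P {\<omega> \<in> space P.
                   ereal (an n) * (INF k\<in>{n..}. ereal (mhat k \<omega> - m)) < ereal x}))
              \<le> eexp (- ereal (2 / (\<beta>m - \<alpha>m)^2) * (\<delta> x)^2)))
   \<and> (\<forall>\<alpha>p \<beta>p \<alpha>m \<beta>m. (a \<longlongrightarrow> \<alpha>p) (at_right 0) \<and> (b \<longlongrightarrow> \<beta>p) (at_right 0) \<and> \<beta>p > \<alpha>p
        \<and> (a \<longlongrightarrow> \<alpha>m) (at_left 0) \<and> (b \<longlongrightarrow> \<beta>m) (at_left 0) \<and> \<beta>m > \<alpha>m \<longrightarrow>
        (let \<tau> = max (\<beta>p - \<alpha>p) (\<beta>m - \<alpha>m) in
         \<forall>x>0. limsup (\<lambda>n. ereal (measure P {\<omega> \<in> space P.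
                   ereal (an n) * (SUP k\<in>{n..}. ereal \<bar>mhat k \<omega> - m\<bar>) > ereal x}))
              \<le> 2 * eexp (- ereal (2 / \<tau>^2) * (min (\<delta> x) (- \<delta> (-x)))^2)))"
proof -
  interpret convex_m_estimation Q P h t0 m X mhat a b an \<delta>
    by (intro convex_m_estimation.intro convex_m_estimation_axioms.intro) (fact assms)+
  show ?thesis
    unfolding Let_def
    by (blast intro: limsup_prob_sup_deviation limsup_prob_inf_deviation limsup_prob_sup_abs_deviation)
qed

end
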